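(* Let $p$ be prime, $f:\mathrm{GF}(p)^n\to\mathrm{GF}(p)$ a polynomial function and $t=\prod_{j=1}^k x_{i_j}^{m_j}$ with distinct indices and $1\le m_j\le p-1$. Write $f=t\,f_{S(t)}+r$ with no monomial of $r$ divisible by $t$, and write $f_{S(t)}=t_1g_1+\cdots+t_ug_u$ where $g_1,\ldots,g_u$ are polynomials not depending on any of $x_{i_1},\ldots,x_{i_k}$ and $t_1,\ldots,t_u$ are all the distinct terms (monomials) in the variables $x_{i_1},\ldots,x_{i_k}$ appearing in $f_{S(t)}$. Let $\mathbf{u}$ be the $n$-tuple with $0$ in positions $i_1,\ldots,i_k$ and indeterminates elsewhere. Then \[ f_t(\mathbf{u}) = c_1g_1+\cdots+c_ug_u, \] where, if $t_s=x_{i_1}^{\ell_1}\cdots x_{i_k}^{\ell_k}$, the constant is $c_s=\prod_{j=1}^k D(m_j+\ell_j,m_j+\ell_j,m_j)\in\mathrm{GF}(p)$. In particular, if $f_{S(t)}$ does not depend on any of $x_{i_1},\ldots,x_{i_k}$, then $f_t=m_1!\cdots m_k!\,f_{S(t)}$.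
   Context: Polynomial functions over $\mathrm{GF}(p)$ are represented by their unique polynomial of degree at most $p-1$ in each variable. $f_t=\Delta^{(m_1)}_{\mathbf{e}_{i_1},\ldots,\mathbf{e}_{i_1}}\cdots\Delta^{(m_k)}_{\mathbf{e}_{i_k},\ldots,\mathbf{e}_{i_k}} f$ (difference $m_j$ times w.r.t. $x_{i_j}$ with step $1$), where $(\Delta_{\mathbf{a}} f)(\mathbf{x}) = f(\mathbf{x}+\mathbf{a})-f(\mathbf{x})$. For $1\le m\le j\le d$, $D(d,j,m)=\sum\binom{d}{i_1,\ldots,i_m,d-j}$ over $(i_1,\ldots,i_m)\in\{1,\ldots,j-m+1\}^m$ with $i_1+\cdots+i_m=j$ (multinomials read mod $p$). *)

theory Defs
  imports Main "HOL-Library.FuncSet" "HOL-Computational_Algebra.Primes"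
begin

text \<open>Polynomial functions over GF(p) in variables x_0,...,x_{n-1} are given by the
  coefficient function of their unique reduced polynomial: exponent vectors
  e :: nat => nat with e i < p for i < n and e i = 0 for i >= n.
  Points of GF(p)^n are functions x :: nat => 'a (only x 0,...,x (n-1) matter).\<close>

definition expvecs :: "nat \<Rightarrow> nat \<Rightarrow> (nat \<Rightarrow> nat) set" where
  "expvecs n p = {e. (\<forall>i<n. e i < p) \<and> (\<forall>i\<ge>n. e i = 0)}"

definition reduced_poly :: "nat \<Rightarrow> nat \<Rightarrow> ((nat \<Rightarrow> nat) \<Rightarrow> 'a::zero) \<Rightarrow> bool" where
  "reduced_poly n p C \<longleftrightarrow> (\<forall>e. C e \<noteq> 0 \<longrightarrow> e \<in> expvecs n p)"

definition monom_eval :: "nat \<Rightarrow> (nat \<Rightarrow> nat) \<Rightarrow> (nat \<Rightarrow> 'a::comm_ring_1) \<Rightarrow> 'a" where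
  "monom_eval n e x = (\<Prod>i<n. x i ^ e i)"

definition poly_eval :: "nat \<Rightarrow> nat \<Rightarrow> ((nat \<Rightarrow> nat) \<Rightarrow> 'a::comm_ring_1) \<Rightarrow> (nat \<Rightarrow> 'a) \<Rightarrow> 'a" where
  "poly_eval n p C x = (\<Sum>e\<in>expvecs n p. C e * monom_eval n e x)"

definition delta :: "nat \<Rightarrow> ((nat \<Rightarrow> 'a::comm_ring_1) \<Rightarrow> 'a) \<Rightarrow> (nat \<Rightarrow> 'a) \<Rightarrow> 'a" where
  "delta i F x = F (x(i := x i + 1)) - F x"

definition iter_diff :: "nat set \<Rightarrow> (nat \<Rightarrow> nat) \<Rightarrow> ((nat \<Rightarrow> 'a::comm_ring_1) \<Rightarrow> 'a) \<Rightarrow> (nat \<Rightarrow> 'a) \<Rightarrow> 'a" where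
  "iter_diff I m F = foldr (\<lambda>i G. (delta i ^^ m i) G) (sorted_list_of_set I) F"

definition multinom :: "nat \<Rightarrow> nat \<Rightarrow> (nat \<Rightarrow> nat) \<Rightarrow> nat" where
  "multinom d m is = fact d div ((\<Prod>k<m. fact (is k)) * fact (d - (\<Sum>k<m. is k)))"

definition Dcoef :: "nat \<Rightarrow> nat \<Rightarrow> nat \<Rightarrow> 'a::semiring_1" where
  "Dcoef d j m = of_nat (\<Sum>is\<in>{is \<in> PiE {..<m} (\<lambda>_. {1..j-m+1}). (\<Sum>k<m. is k) = j}.
                             multinom d m is)"

text \<open>Coefficients of f_{S(t)} where t = prod_{i in I} x_i^{m i}: f = t f_{S(t)} + r.\<close>
definition fS :: "nat set \<Rightarrow> (nat \<Rightarrow> nat) \<Rightarrow> ((nat \<Rightarrow> nat) \<Rightarrow> 'a) \<Rightarrow> (nat \<Rightarrow> nat) \<Rightarrow> 'a" where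
  "fS I m C d = C (\<lambda>i. if i \<in> I then d i + m i else d i)"

text \<open>Terms t_s in the variables x_i (i in I) occurring in f_{S(t)}, given by their
  exponent vectors l (supported in I).\<close>
definition terms_in :: "nat set \<Rightarrow> ((nat \<Rightarrow> nat) \<Rightarrow> 'a::zero) \<Rightarrow> (nat \<Rightarrow> nat) set" where
  "terms_in I G = {l. (\<forall>i. i \<notin> I \<longrightarrow> l i = 0) \<and> (\<exists>d. G d \<noteq> 0 \<and> (\<forall>i\<in>I. d i = l i))}"

definition cofactor :: "nat \<Rightarrow> nat \<Rightarrow> nat set \<Rightarrow> ((nat \<Rightarrow> nat) \<Rightarrow> 'a::comm_ring_1) \<Rightarrow> (nat \<Rightarrow> nat) \<Rightarrow> (nat \<Rightarrow> 'a) \<Rightarrow> 'a" where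
  "cofactor n p I G l x =
     (\<Sum>d\<in>{d\<in>expvecs n p. \<forall>i\<in>I. d i = l i}. G d * (\<Prod>i\<in>{..<n} - I. x i ^ d i))"

end

theory Submission
  imports Defs
begin

(* A reduced polynomial is a sum of monomials, each a product of univariate powers
   x_j ^ e_j; the difference operator in direction x_i only acts on the i-th factor, where it is
   the one-variable forward difference fdiff.  Hence
     f_t(x) = sum_e C e * prod_{i in I} (fdiff^m_i)(t^(e_i))(x_i) * prod_{j notin I} x_j^(e_j),
   and since (fdiff^m)(t^a) = 0 for a < m, only exponents e = d + m (on I) contribute; that is,
   the sum can be reindexed by the coefficients fS d of f_{S(t)} (lemma iter_diff_shifted).
   Two evaluations of the univariate factor finish the proof:
   - at 0 one gets (fdiff^m)(t^a)(0) = surj_count a m, the number of surjections from an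
     a-set onto an m-set, which equals D(a,a,m) as a sum of multinomials over compositions of a;
     grouping the remaining monomials by their I-part gives the cofactors g_s;
   - (fdiff^m)(t^m) is the constant m!, which gives the special case f_t = m_1!...m_k! f_{S(t)}. *)

section \<open>The coefficients D(a,a,m) count surjections\<close>

definition compositions :: "nat \<Rightarrow> nat \<Rightarrow> (nat \<Rightarrow> nat) set" where
  "compositions j m = {v \<in> PiE {..<m} (\<lambda>_. {1..j}). (\<Sum>k<m. v k) = j}"

text \<open>Number of surjections from an a-element set onto an m-element set, via the recursion
  that chooses the preimage (of size a - k \<ge> 1) of the last point.\<close>
fun surj_count :: "nat \<Rightarrow> nat \<Rightarrow> nat" where
  "surj_count a 0 = (if a = 0 then 1 else 0)"
| "surj_count a (Suc m) = (\<Sum>k<a. (a choose k) * surj_count k m)"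

text \<open>The multinomial coefficient is an exact quotient.\<close>
lemma prod_fact_dvd_fact_sum:
  fixes m :: nat and v :: "nat \<Rightarrow> nat"
  shows "(\<Prod>k<m. fact (v k)) dvd (fact (\<Sum>k<m. v k) :: nat)"
proof (induction m)
  case 0 then show ?case by simp
next
  case (Suc m)
  let ?s = "\<Sum>k<m. v k"
  have "fact (?s + v m) = fact ?s * fact (v m) * ((?s + v m) choose ?s)"
    using binomial_fact_lemma[of ?s "?s + v m"] by simp
  then have "fact ?s * fact (v m) dvd (fact (?s + v m) :: nat)" by simp
  moreover have "(\<Prod>k<m. fact (v k)) * fact (v m) dvd fact ?s * (fact (v m) :: nat)"
    using Suc by (simp add: mult_dvd_mono)
  ultimately have "(\<Prod>k<m. fact (v k)) * fact (v m) dvd (fact (?s + v m) :: nat)"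
    by (rule dvd_trans[rotated])
  then show ?case by simp
qed

lemma fact_eq_multinom:
  assumes "(\<Sum>k<m. v k) = j"
  shows "fact j = multinom j m v * (\<Prod>k<m. fact (v k))"
  using prod_fact_dvd_fact_sum[where m=m and v=v] assms by (simp add: multinom_def)

lemma finite_compositions: "finite (compositions j m)"
  unfolding compositions_def by (rule finite_subset[of _ "PiE {..<m} (\<lambda>_. {1..j})"]) (auto intro: finite_PiE)

lemma multinom_append:
  assumes "v \<in> compositions k m" "k < a"
  shows "multinom a (Suc m) (v(m := a - k)) = (a choose k) * multinom k m v"
proof -
  have sum_v: "(\<Sum>j<m. v j) = k" using assms unfolding compositions_def by auto
  have sum_w: "(\<Sum>j<Suc m. (v(m := a - k)) j) = a" using sum_v assms(2) by simp
  have prod_w: "(\<Prod>j<Suc m. fact ((v(m := a - k)) j)) = (\<Prod>j<m. fact (v j)) * fact (a - k)"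
    by simp
  have "fact a = multinom a (Suc m) (v(m := a - k)) * ((\<Prod>j<m. fact (v j)) * fact (a - k))"
    by (subst prod_w[symmetric]) (rule fact_eq_multinom[OF sum_w])
  moreover have "fact a = fact k * fact (a - k) * (a choose k)"
    using binomial_fact_lemma[of k a] assms(2) by simp
  ultimately have "multinom a (Suc m) (v(m := a - k)) * ((\<Prod>j<m. fact (v j)) * fact (a - k))
      = ((a choose k) * multinom k m v) * ((\<Prod>j<m. fact (v j)) * fact (a - k))"
    using fact_eq_multinom[OF sum_v] by (simp add: ac_simps)
  then show ?thesis by simp
qed

text \<open>Splitting off the last part of a composition gives the recursion of surj_count.\<close>
lemma sum_multinom_compositions_Suc:
  "(\<Sum>v\<in>compositions a (Suc m). multinom a (Suc m) v)
   = (\<Sum>k<a. (a choose k) * (\<Sum>v\<in>compositions k m. multinom k m v))"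
proof -
  have "(\<Sum>k<a. (a choose k) * (\<Sum>v\<in>compositions k m. multinom k m v))
      = (\<Sum>(k, v)\<in>Sigma {..<a} (\<lambda>k. compositions k m). (a choose k) * multinom k m v)"
    by (simp add: sum_distrib_left sum.Sigma finite_compositions)
  also have "\<dots> = (\<Sum>v\<in>compositions a (Suc m). multinom a (Suc m) v)"
  proof (rule sum.reindex_bij_witness[where j = "\<lambda>(k, v). v(m := a - k)"
        and i = "\<lambda>v. (a - v m, v(m := undefined))"])
    fix x assume "x \<in> Sigma {..<a} (\<lambda>k. compositions k m)"
    then obtain k v where x: "x = (k, v)" "k < a" and v: "v \<in> compositions k m" by auto
    then have "\<forall>j<m. v j \<in> {1..k}" "(\<Sum>j<m. v j) = k" "\<forall>j\<ge>m. v j = undefined"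
      unfolding compositions_def by (auto simp: PiE_iff extensional_def)
    then show "(case x of (k, v) \<Rightarrow> v(m := a - k)) \<in> compositions a (Suc m)"
      and "(\<lambda>v. (a - v m, v(m := undefined))) (case x of (k, v) \<Rightarrow> v(m := a - k)) = x"
      using x unfolding compositions_def by (auto simp: PiE_iff extensional_def less_Suc_eq)
    show "multinom a (Suc m) (case x of (k, v) \<Rightarrow> v(m := a - k)) =
          (case x of (k, v) \<Rightarrow> (a choose k) * multinom k m v)"
      using x v multinom_append by auto
  next
    fix y assume "y \<in> compositions a (Suc m)"
    then have y: "\<forall>j<Suc m. y j \<in> {1..a}" "\<forall>j\<ge>Suc m. y j = undefined"
      "(\<Sum>j<m. y j) + y m = a"
      unfolding compositions_def by (auto simp: PiE_iff extensional_def)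
    have "\<And>j. j < m \<Longrightarrow> y j \<le> (\<Sum>j<m. y j)" by (rule member_le_sum) auto
    then show "(a - y m, y(m := undefined)) \<in> Sigma {..<a} (\<lambda>k. compositions k m)"
      and "(case (a - y m, y(m := undefined)) of (k, v) \<Rightarrow> v(m := a - k)) = y"
      using y unfolding compositions_def by (auto simp: PiE_iff extensional_def)
  qed
  finally show ?thesis by simp
qed

lemma sum_multinom_compositions: "(\<Sum>v\<in>compositions a m. multinom a m v) = surj_count a m"
proof (induction m arbitrary: a)
  case 0
  have "compositions a 0 = (if a = 0 then {\<lambda>_. undefined} else {})"
    unfolding compositions_def by auto
  then show ?case by (simp add: multinom_def)
next
  case (Suc m)
  then show ?case by (simp add: sum_multinom_compositions_Suc)
qed

text \<open>In a composition of a into m positive parts each part is at most a - m + 1, so the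
  index set of D(a,a,m) is exactly the set of compositions.\<close>
lemma compositions_bounded_parts:
  assumes "1 \<le> m"
  shows "{v \<in> PiE {..<m} (\<lambda>_. {1..a-m+1}). (\<Sum>k<m. v k) = a} = compositions a m"
proof
  show "{v \<in> PiE {..<m} (\<lambda>_. {1..a-m+1}). (\<Sum>k<m. v k) = a} \<subseteq> compositions a m"
    unfolding compositions_def using assms by (auto simp: PiE_iff intro!: member_le_sum)
next
  show "compositions a m \<subseteq> {v \<in> PiE {..<m} (\<lambda>_. {1..a-m+1}). (\<Sum>k<m. v k) = a}"
  proof
    fix y assume "y \<in> compositions a m"
    then have y: "\<forall>j<m. y j \<in> {1..a}" "(\<Sum>j<m. y j) = a" "y \<in> extensional {..<m}"
      unfolding compositions_def by (auto simp: PiE_iff)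
    have "y k \<le> a - m + 1" if k: "k < m" for k
    proof -
      have "(\<Sum>j<m. y j) = y k + (\<Sum>j\<in>{..<m}-{k}. y j)"
        using k by (simp add: sum.remove)
      moreover have "(\<Sum>j\<in>{..<m}-{k}. y j) \<ge> (\<Sum>j\<in>{..<m}-{k}. 1)"
        using y(1) by (intro sum_mono) auto
      ultimately show ?thesis using y(2) k by simp
    qed
    then show "y \<in> {v \<in> PiE {..<m} (\<lambda>_. {1..a-m+1}). (\<Sum>k<m. v k) = a}"
      using y by (auto simp: PiE_iff)
  qed
qed

lemma Dcoef_diag_eq_surj_count:
  assumes "1 \<le> m"
  shows "Dcoef a a m = (of_nat (surj_count a m) :: 'a::semiring_1)"
  unfolding Dcoef_def compositions_bounded_parts[OF assms] sum_multinom_compositions ..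

lemma surj_count_less: "k < m \<Longrightarrow> surj_count k m = 0"
  by (induction m arbitrary: k) auto

lemma surj_count_diag: "surj_count m m = fact m"
proof (induction m)
  case 0 then show ?case by simp
next
  case (Suc m)
  have "surj_count (Suc m) (Suc m)
      = (\<Sum>k<m. (Suc m choose k) * surj_count k m) + (Suc m choose m) * surj_count m m"
    by simp
  then show ?case using Suc by (simp add: surj_count_less)
qed

section \<open>The univariate forward difference\<close>

text \<open>The forward difference of a function of one variable; delta i acts as fdiff on x_i.\<close>
definition fdiff :: "('a::comm_ring_1 \<Rightarrow> 'a) \<Rightarrow> 'a \<Rightarrow> 'a" where
  "fdiff g t = g (t + 1) - g t"

lemma fdiff_funpow_linear:
  assumes "finite K"
  shows "(fdiff ^^ k) (\<lambda>t. \<Sum>j\<in>K. c j * g j t) = (\<lambda>t. \<Sum>j\<in>K. c j * (fdiff ^^ k) (g j) t)"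
proof (induction k arbitrary: g)
  case 0 then show ?case by simp
next
  case (Suc k)
  have "fdiff (\<lambda>t. \<Sum>j\<in>K. c j * g j t) = (\<lambda>t. \<Sum>j\<in>K. c j * fdiff (g j) t)"
    using assms by (simp add: fdiff_def fun_eq_iff sum_subtractf[symmetric] right_diff_distrib)
  then show ?case
    using Suc[of "\<lambda>j. fdiff (g j)"] by (simp add: funpow_Suc_right del: funpow.simps)
qed

lemma fdiff_power: "fdiff (\<lambda>t. t ^ a) = (\<lambda>t. \<Sum>k<a. of_nat (a choose k) * t ^ k)"
proof
  fix t :: 'a
  have "(t + 1) ^ a = (\<Sum>k\<le>a. of_nat (a choose k) * t ^ k)"
    using binomial_ring[of t 1 a] by simp
  also have "\<dots> = (\<Sum>k<a. of_nat (a choose k) * t ^ k) + t ^ a"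
    by (simp add: lessThan_Suc_atMost[symmetric])
  finally show "fdiff (\<lambda>t. t ^ a) t = (\<Sum>k<a. of_nat (a choose k) * t ^ k)"
    by (simp add: fdiff_def)
qed

lemma fdiff_funpow_power_at_0:
  "(fdiff ^^ m) (\<lambda>t. t ^ a) (0::'a::comm_ring_1) = of_nat (surj_count a m)"
proof (induction m arbitrary: a)
  case 0 then show ?case by (cases a) simp_all
next
  case (Suc m)
  have "(fdiff ^^ Suc m) (\<lambda>t::'a. t ^ a) = (fdiff ^^ m) (fdiff (\<lambda>t. t ^ a))"
    by (simp add: funpow_Suc_right del: funpow.simps)
  also have "\<dots> = (\<lambda>t. \<Sum>k<a. of_nat (a choose k) * (fdiff ^^ m) (\<lambda>t. t ^ k) t)"
    unfolding fdiff_power by (rule fdiff_funpow_linear) simp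
  finally show ?case using Suc by simp
qed

lemma fdiff_funpow_translate: "(fdiff ^^ m) (\<lambda>s. g (s + c)) x = (fdiff ^^ m) g (x + c)"
proof (induction m arbitrary: g)
  case 0 then show ?case by simp
next
  case (Suc m)
  have "fdiff (\<lambda>s. g (s + c)) = (\<lambda>s. fdiff g (s + c))"
    by (simp add: fdiff_def fun_eq_iff add_ac)
  then show ?case by (simp add: funpow_Suc_right Suc del: funpow.simps)
qed

text \<open>Expanding (s + x)^a binomially reduces the difference at x to differences at 0.\<close>
lemma fdiff_funpow_power:
  "(fdiff ^^ m) (\<lambda>t. t ^ a) (x::'a::comm_ring_1)
   = (\<Sum>k\<le>a. of_nat (a choose k) * x ^ (a - k) * of_nat (surj_count k m))"
proof -
  have "(fdiff ^^ m) (\<lambda>t. t ^ a) x = (fdiff ^^ m) (\<lambda>s. (s + x) ^ a) 0"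
    using fdiff_funpow_translate[of m "\<lambda>t. t ^ a" x 0] by simp
  also have "(\<lambda>s. (s + x) ^ a) = (\<lambda>s. \<Sum>k\<le>a. (of_nat (a choose k) * x ^ (a - k)) * s ^ k)"
    by (simp add: fun_eq_iff binomial_ring ac_simps)
  finally show ?thesis by (simp add: fdiff_funpow_linear fdiff_funpow_power_at_0)
qed

lemma fdiff_funpow_power_less:
  "a < m \<Longrightarrow> (fdiff ^^ m) (\<lambda>t. t ^ a) (x::'a::comm_ring_1) = 0"
  by (simp add: fdiff_funpow_power surj_count_less)

lemma fdiff_funpow_power_diag: "(fdiff ^^ m) (\<lambda>t. t ^ m) (x::'a::comm_ring_1) = of_nat (fact m)"
  by (simp add: fdiff_funpow_power lessThan_Suc_atMost[symmetric] surj_count_less surj_count_diag)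

section \<open>Differences of polynomial functions\<close>

lemma delta_sum_prod:
  assumes "i < n"
  shows "delta i (\<lambda>x. \<Sum>e\<in>E. c e * (\<Prod>j<n. \<phi> e j (x j)))
       = (\<lambda>x. \<Sum>e\<in>E. c e * (\<Prod>j<n. ((\<phi> e)(i := fdiff (\<phi> e i))) j (x j)))"
proof
  fix x :: "nat \<Rightarrow> 'a::comm_ring_1"
  have split: "(\<Prod>j<n. \<psi> j (y j)) = \<psi> i (y i) * (\<Prod>j\<in>{..<n}-{i}. \<psi> j (y j))"
    for \<psi> :: "nat \<Rightarrow> 'a \<Rightarrow> 'a" and y
    using assms by (simp add: prod.remove)
  show "delta i (\<lambda>x. \<Sum>e\<in>E. c e * (\<Prod>j<n. \<phi> e j (x j))) x
       = (\<Sum>e\<in>E. c e * (\<Prod>j<n. ((\<phi> e)(i := fdiff (\<phi> e i))) j (x j)))"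
    unfolding delta_def split[where y = "x(i := x i + 1)"] split[where y = x] fdiff_def
    by (simp add: sum_subtractf[symmetric] algebra_simps)
qed

lemma delta_funpow_sum_prod:
  assumes "i < n"
  shows "(delta i ^^ k) (\<lambda>x. \<Sum>e\<in>E. c e * (\<Prod>j<n. \<phi> e j (x j)))
       = (\<lambda>x. \<Sum>e\<in>E. c e * (\<Prod>j<n. ((\<phi> e)(i := (fdiff ^^ k) (\<phi> e i))) j (x j)))"
proof (induction k arbitrary: \<phi>)
  case 0 then show ?case by (simp cong: prod.cong)
next
  case (Suc k)
  have "(delta i ^^ Suc k) (\<lambda>x. \<Sum>e\<in>E. c e * (\<Prod>j<n. \<phi> e j (x j)))
      = (delta i ^^ k) (delta i (\<lambda>x. \<Sum>e\<in>E. c e * (\<Prod>j<n. \<phi> e j (x j))))"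
    by (simp add: funpow_Suc_right del: funpow.simps)
  also have "\<dots> = (\<lambda>x. \<Sum>e\<in>E. c e * (\<Prod>j<n. (((\<phi> e)(i := fdiff (\<phi> e i)))
                    (i := (fdiff ^^ k) (((\<phi> e)(i := fdiff (\<phi> e i))) i))) j (x j)))"
    unfolding delta_sum_prod[OF assms] by (rule Suc.IH)
  also have "\<dots> = (\<lambda>x. \<Sum>e\<in>E. c e * (\<Prod>j<n. ((\<phi> e)(i := (fdiff ^^ Suc k) (\<phi> e i))) j (x j)))"
    by (simp add: funpow_Suc_right del: funpow.simps)
  finally show ?case .
qed

lemma foldr_delta_sum_prod:
  assumes "distinct xs" "set xs \<subseteq> {..<n}"
  shows "foldr (\<lambda>i G. (delta i ^^ m i) G) xs (\<lambda>x. \<Sum>e\<in>E. c e * (\<Prod>j<n. \<phi> e j (x j)))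
       = (\<lambda>x. \<Sum>e\<in>E. c e *
            (\<Prod>j<n. (if j \<in> set xs then (fdiff ^^ m j) (\<phi> e j) else \<phi> e j) (x j)))"
  using assms
proof (induction xs)
  case Nil then show ?case by simp
next
  case (Cons i xs)
  let ?\<psi> = "\<lambda>e j. if j \<in> set xs then (fdiff ^^ m j) (\<phi> e j) else \<phi> e j"
  have "foldr (\<lambda>i G. (delta i ^^ m i) G) (i # xs) (\<lambda>x. \<Sum>e\<in>E. c e * (\<Prod>j<n. \<phi> e j (x j)))
      = (delta i ^^ m i) (\<lambda>x. \<Sum>e\<in>E. c e * (\<Prod>j<n. ?\<psi> e j (x j)))"
    using Cons by simp
  also have "\<dots> = (\<lambda>x. \<Sum>e\<in>E. c e * (\<Prod>j<n. ((?\<psi> e)(i := (fdiff ^^ m i) (?\<psi> e i))) j (x j)))"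
    using Cons.prems by (intro delta_funpow_sum_prod) auto
  also have "\<dots> = (\<lambda>x. \<Sum>e\<in>E. c e *
      (\<Prod>j<n. (if j \<in> set (i # xs) then (fdiff ^^ m j) (\<phi> e j) else \<phi> e j) (x j)))"
    using Cons.prems by (intro ext sum.cong refl arg_cong2[where f="(*)"] prod.cong) auto
  finally show ?case .
qed

lemma prod_lessThan_split:
  fixes n :: nat
  assumes "I \<subseteq> {..<n}"
  shows "(\<Prod>j<n. f j) = (\<Prod>j\<in>I. f j) * (\<Prod>j\<in>{..<n}-I. f j)"
  using prod.subset_diff[OF assms finite_lessThan, of f] by (simp add: mult.commute)

lemma iter_diff_poly_eval:
  assumes "I \<subseteq> {..<n}"
  shows "iter_diff I m (poly_eval n p C) x = (\<Sum>e\<in>expvecs n p. C e *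
     ((\<Prod>i\<in>I. (fdiff ^^ m i) (\<lambda>t. t ^ e i) (x i)) * (\<Prod>j\<in>{..<n}-I. x j ^ e j)))"
proof -
  have fin: "finite I" using assms finite_subset by blast
  have "poly_eval n p C = (\<lambda>x. \<Sum>e\<in>expvecs n p. C e * (\<Prod>j<n. (\<lambda>t. t ^ e j) (x j)))"
    by (simp add: fun_eq_iff poly_eval_def monom_eval_def)
  then have "iter_diff I m (poly_eval n p C) x = (\<Sum>e\<in>expvecs n p. C e *
     (\<Prod>j<n. (if j \<in> I then (fdiff ^^ m j) (\<lambda>t. t ^ e j) else (\<lambda>t. t ^ e j)) (x j)))"
    unfolding iter_diff_def
    using foldr_delta_sum_prod[where xs="sorted_list_of_set I" and n=n and m=m
        and E="expvecs n p" and c=C and \<phi>="\<lambda>e j t. t ^ e j"] fin assms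
    by simp
  moreover have "(\<Prod>j\<in>I. (if j \<in> I then (fdiff ^^ m j) (\<lambda>t. t ^ e j) else (\<lambda>t. t ^ e j)) (x j))
      = (\<Prod>i\<in>I. (fdiff ^^ m i) (\<lambda>t. t ^ e i) (x i))"
    and "(\<Prod>j\<in>{..<n}-I. (if j \<in> I then (fdiff ^^ m j) (\<lambda>t. t ^ e j) else (\<lambda>t. t ^ e j)) (x j))
      = (\<Prod>j\<in>{..<n}-I. x j ^ e j)" for e
    by (auto intro: prod.cong)
  ultimately show ?thesis by (simp add: prod_lessThan_split[OF assms])
qed

section \<open>Reindexing by the exponents of f_{S(t)}\<close>

lemma finite_expvecs: "finite (expvecs n p)"
proof -
  have "expvecs n p = {f. \<forall>x. (x \<in> {..<n} \<longrightarrow> f x \<in> {..<p}) \<and> (x \<notin> {..<n} \<longrightarrow> f x = 0)}"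
    unfolding expvecs_def lessThan_iff by (intro Collect_cong) (metis not_less)
  then show ?thesis using finite_set_of_finite_funs[of "{..<n}" "{..<p}" 0] by simp
qed

text \<open>Multiplying a monomial by t = prod_{i in I} x_i^(m i) shifts its exponent vector.\<close>
definition shift :: "nat set \<Rightarrow> (nat \<Rightarrow> nat) \<Rightarrow> (nat \<Rightarrow> nat) \<Rightarrow> nat \<Rightarrow> nat" where
  "shift I m d = (\<lambda>i. if i \<in> I then d i + m i else d i)"

lemma fS_shift: "fS I m C d = C (shift I m d)"
  unfolding fS_def shift_def ..

lemma reduced_fS:
  assumes "reduced_poly n p C" "I \<subseteq> {..<n}"
  shows "reduced_poly n p (fS I m C)"
  unfolding reduced_poly_def
proof (intro allI impI)
  fix d assume "fS I m C d \<noteq> 0"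
  then have "shift I m d \<in> expvecs n p"
    using assms(1) unfolding reduced_poly_def fS_shift by blast
  then show "d \<in> expvecs n p"
    using assms(2) unfolding expvecs_def shift_def by (auto split: if_splits)
qed

lemma sum_expvecs_shift:
  assumes red: "reduced_poly n p C" and I: "I \<subseteq> {..<n}"
    and h: "\<And>e. C e = 0 \<or> (\<exists>i\<in>I. e i < m i) \<Longrightarrow> h e = 0"
  shows "(\<Sum>d\<in>expvecs n p. h (shift I m d)) = (\<Sum>e\<in>expvecs n p. h e)"
proof -
  let ?E = "expvecs n p"
  let ?E' = "{d\<in>?E. shift I m d \<in> ?E}"
  have "(\<Sum>d\<in>?E. h (shift I m d)) = (\<Sum>d\<in>?E'. h (shift I m d))"
    using red h by (intro sum.mono_neutral_right) (auto simp: finite_expvecs reduced_poly_def)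
  also have "\<dots> = (\<Sum>e\<in>shift I m ` ?E'. h e)"
  proof -
    have "inj (shift I m)"
    proof (rule injI)
      fix d1 d2 assume "shift I m d1 = shift I m d2"
      then show "d1 = d2"
        unfolding shift_def fun_eq_iff by (metis add_right_cancel)
    qed
    then show ?thesis by (simp add: sum.reindex inj_on_subset)
  qed
  also have "\<dots> = (\<Sum>e\<in>?E. h e)"
  proof (rule sum.mono_neutral_left[OF finite_expvecs])
    show "shift I m ` ?E' \<subseteq> ?E" by auto
    show "\<forall>e\<in>?E - shift I m ` ?E'. h e = 0"
    proof
      fix e assume e: "e \<in> ?E - shift I m ` ?E'"
      show "h e = 0"
      proof (rule h, rule disjI2, rule ccontr)
        assume "\<not> (\<exists>i\<in>I. e i < m i)"
        then have "shift I m (\<lambda>i. if i \<in> I then e i - m i else e i) = e"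
          by (auto simp: shift_def fun_eq_iff)
        moreover have "(\<lambda>i. if i \<in> I then e i - m i else e i) \<in> ?E"
          using e I unfolding expvecs_def by auto
        ultimately show False using e by force
      qed
    qed
  qed
  finally show ?thesis .
qed

lemma iter_diff_shifted:
  assumes red: "reduced_poly n p C" and I: "I \<subseteq> {..<n}"
  shows "iter_diff I m (poly_eval n p C) x = (\<Sum>d\<in>expvecs n p. fS I m C d *
     ((\<Prod>i\<in>I. (fdiff ^^ m i) (\<lambda>t. t ^ (m i + d i)) (x i)) * (\<Prod>j\<in>{..<n}-I. x j ^ d j)))"
proof -
  define h where "h e = C e *
     ((\<Prod>i\<in>I. (fdiff ^^ m i) (\<lambda>t. t ^ e i) (x i)) * (\<Prod>j\<in>{..<n}-I. x j ^ e j))" for e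
  have fin: "finite I" using I finite_subset by blast
  have "h e = 0" if vanish: "C e = 0 \<or> (\<exists>i\<in>I. e i < m i)" for e
  proof (cases "C e = 0")
    case False
    then obtain i where "i \<in> I" "e i < m i" using vanish by blast
    then have "(\<Prod>i\<in>I. (fdiff ^^ m i) (\<lambda>t. t ^ e i) (x i)) = 0"
      using fin by (intro prod_zero bexI[of _ i]) (auto simp: fdiff_funpow_power_less)
    then show ?thesis by (simp add: h_def)
  qed (simp add: h_def)
  then have "(\<Sum>e\<in>expvecs n p. h e) = (\<Sum>d\<in>expvecs n p. h (shift I m d))"
    by (rule sum_expvecs_shift[OF red I, symmetric])
  moreover have "h (shift I m d) = fS I m C d *
     ((\<Prod>i\<in>I. (fdiff ^^ m i) (\<lambda>t. t ^ (m i + d i)) (x i)) * (\<Prod>j\<in>{..<n}-I. x j ^ d j))" for d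
  proof -
    have "(\<Prod>i\<in>I. (fdiff ^^ m i) (\<lambda>t. t ^ shift I m d i) (x i))
        = (\<Prod>i\<in>I. (fdiff ^^ m i) (\<lambda>t. t ^ (m i + d i)) (x i))"
      by (intro prod.cong) (simp_all add: shift_def add.commute)
    moreover have "(\<Prod>j\<in>{..<n}-I. x j ^ shift I m d j) = (\<Prod>j\<in>{..<n}-I. x j ^ d j)"
      by (intro prod.cong) (auto simp: shift_def)
    ultimately show ?thesis unfolding h_def fS_shift by simp
  qed
  ultimately show ?thesis by (simp add: iter_diff_poly_eval[OF I] h_def)
qed

lemma sum_group_by_terms:
  assumes G: "reduced_poly n p G"
  shows "(\<Sum>d\<in>expvecs n p. G d * ((\<Prod>i\<in>I. w i (d i)) * (\<Prod>j\<in>{..<n}-I. x j ^ d j)))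
       = (\<Sum>l\<in>terms_in I G. (\<Prod>i\<in>I. w i (l i)) * cofactor n p I G l x)"
proof -
  let ?E = "expvecs n p"
  let ?S = "{d\<in>?E. G d \<noteq> 0}"
  let ?restr = "\<lambda>d i. if i \<in> I then d i else (0::nat)"
  define F where "F d = G d * ((\<Prod>i\<in>I. w i (d i)) * (\<Prod>j\<in>{..<n}-I. x j ^ d j))" for d
  have restr_eq: "?restr d = l \<longleftrightarrow> (\<forall>i\<in>I. d i = l i)" if "l \<in> terms_in I G" for d l
    using that by (auto simp: terms_in_def fun_eq_iff)
  have terms: "terms_in I G = ?restr ` ?S"
  proof
    show "terms_in I G \<subseteq> ?restr ` ?S"
    proof
      fix l assume l: "l \<in> terms_in I G"
      then obtain d where "G d \<noteq> 0" "\<forall>i\<in>I. d i = l i" unfolding terms_in_def by auto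
      then have "?restr d = l" using restr_eq[OF l] by blast
      then show "l \<in> ?restr ` ?S"
        using \<open>G d \<noteq> 0\<close> G unfolding reduced_poly_def by (blast intro: image_eqI[OF sym])
    qed
    show "?restr ` ?S \<subseteq> terms_in I G" unfolding terms_in_def by auto
  qed
  have "(\<Sum>d\<in>?E. F d) = (\<Sum>d\<in>?S. F d)"
    by (rule sum.mono_neutral_right) (auto simp: finite_expvecs F_def)
  also have "\<dots> = (\<Sum>l\<in>terms_in I G. \<Sum>d\<in>{d\<in>?S. ?restr d = l}. F d)"
    unfolding terms by (rule sum.group[symmetric]) (auto simp: finite_expvecs)
  also have "\<dots> = (\<Sum>l\<in>terms_in I G. \<Sum>d\<in>{d\<in>?E. \<forall>i\<in>I. d i = l i}. F d)"
    using restr_eq by (intro sum.cong refl sum.mono_neutral_left) (auto simp: finite_expvecs F_def)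
  also have "\<dots> = (\<Sum>l\<in>terms_in I G. (\<Prod>i\<in>I. w i (l i)) * cofactor n p I G l x)"
    unfolding cofactor_def sum_distrib_left F_def
    by (intro sum.cong refl) (auto simp: ac_simps cong: prod.cong)
  finally show ?thesis by (simp add: F_def)
qed

lemma iter_diff_on_section:
  assumes red: "reduced_poly n p C" and I: "I \<subseteq> {..<n}" and m: "\<forall>i\<in>I. 1 \<le> m i"
    and x0: "\<forall>i\<in>I. x i = 0"
  shows "iter_diff I m (poly_eval n p C) x =
     (\<Sum>l\<in>terms_in I (fS I m C).
        (\<Prod>i\<in>I. Dcoef (m i + l i) (m i + l i) (m i)) * cofactor n p I (fS I m C) l x)"
proof -
  have factor: "(fdiff ^^ m i) (\<lambda>t. t ^ (m i + k)) (x i) = Dcoef (m i + k) (m i + k) (m i)"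
    if "i \<in> I" for i k
    using that m x0 by (simp add: fdiff_funpow_power_at_0 Dcoef_diag_eq_surj_count)
  have "iter_diff I m (poly_eval n p C) x = (\<Sum>d\<in>expvecs n p. fS I m C d *
     ((\<Prod>i\<in>I. Dcoef (m i + d i) (m i + d i) (m i)) * (\<Prod>j\<in>{..<n}-I. x j ^ d j)))"
    unfolding iter_diff_shifted[OF red I] by (simp add: factor cong: prod.cong)
  also have "\<dots> = (\<Sum>l\<in>terms_in I (fS I m C).
        (\<Prod>i\<in>I. Dcoef (m i + l i) (m i + l i) (m i)) * cofactor n p I (fS I m C) l x)"
    by (rule sum_group_by_terms[OF reduced_fS[OF red I],
          where w = "\<lambda>i k. Dcoef (m i + k) (m i + k) (m i)"])
  finally show ?thesis .
qed

lemma iter_diff_pure: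
  assumes red: "reduced_poly n p C" and I: "I \<subseteq> {..<n}"
    and pure: "\<forall>d. fS I m C d \<noteq> 0 \<longrightarrow> (\<forall>i\<in>I. d i = 0)"
  shows "iter_diff I m (poly_eval n p C) x = of_nat (\<Prod>i\<in>I. fact (m i)) * poly_eval n p (fS I m C) x"
  unfolding iter_diff_shifted[OF red I] poly_eval_def sum_distrib_left
proof (rule sum.cong[OF refl])
  fix d
  show "fS I m C d *
          ((\<Prod>i\<in>I. (fdiff ^^ m i) (\<lambda>t. t ^ (m i + d i)) (x i)) * (\<Prod>j\<in>{..<n}-I. x j ^ d j))
      = of_nat (\<Prod>i\<in>I. fact (m i)) * (fS I m C d * monom_eval n d x)"
  proof (cases "fS I m C d = 0")
    case False
    then have d0: "\<forall>i\<in>I. d i = 0" using pure by blast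
    have "(\<Prod>i\<in>I. (fdiff ^^ m i) (\<lambda>t. t ^ (m i + d i)) (x i)) = (\<Prod>i\<in>I. of_nat (fact (m i)))"
      using d0 by (intro prod.cong) (simp_all add: fdiff_funpow_power_diag)
    moreover have "monom_eval n d x = (\<Prod>j\<in>{..<n}-I. x j ^ d j)"
      unfolding monom_eval_def prod_lessThan_split[OF I] using d0 by simp
    ultimately show ?thesis by (simp add: of_nat_prod mult.left_commute)
  qed simp
qed

theorem mainTheorem9:
  fixes p n :: nat and C :: "(nat \<Rightarrow> nat) \<Rightarrow> 'a::field"
    and I :: "nat set" and m :: "nat \<Rightarrow> nat"
  assumes "prime p" and "card (UNIV :: 'a set) = p"
    and "reduced_poly n p C"
    and "I \<subseteq> {..<n}"
    and "\<forall>i\<in>I. 1 \<le> m i \<and> m i \<le> p - 1"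
  shows "(\<forall>x. (\<forall>i\<in>I. x i = 0) \<longrightarrow>
            iter_diff I m (poly_eval n p C) x =
            (\<Sum>l\<in>terms_in I (fS I m C).
               (\<Prod>i\<in>I. Dcoef (m i + l i) (m i + l i) (m i)) * cofactor n p I (fS I m C) l x))
       \<and> ((\<forall>d. fS I m C d \<noteq> 0 \<longrightarrow> (\<forall>i\<in>I. d i = 0)) \<longrightarrow>
            (\<forall>x. iter_diff I m (poly_eval n p C) x =
                 of_nat (\<Prod>i\<in>I. fact (m i)) * poly_eval n p (fS I m C) x))"
  using iter_diff_on_section[OF assms(3,4)] iter_diff_pure[OF assms(3,4)] assms(5) by blast

end
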